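(* Let $\mathcal{K}$ be a connected simplicial complex and $d$ a path-dominated distance function on $\mathrm{vert}(\mathcal{K})$. Then for any two vertices $x,y$ there exists a path-dominated shortest path from $x$ to $y$.
   Context: A function $d:\mathrm{vert}(\mathcal{K})\times\mathrm{vert}(\mathcal{K})\to\mathbb{R}_{\ge0}$ is a path-dominated distance function if (i) $d(x,y)\ge0$ and $d(x,x)=0$ for all vertices, and (ii) for any vertices $x,y$ there is a path $\pi^*$ from $x$ to $y$ in the $1$-skeleton with $d(x,y)=\max_{u\in\mathrm{vert}(\pi^* )}d(x,u)$. A path $\langle u_0=x,u_1,\dots,u_k=y\rangle$ along edges of $\mathcal{K}$ is a path-dominated shortest path if $d(x,u_i)=\max_{j\le i}d(x,u_j)$ for each $i\in[1,k]$. *)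

theory Defs
  imports Complex_Main
begin

definition simplicial_complex :: "'a set set \<Rightarrow> bool" where
  "simplicial_complex K \<longleftrightarrow> finite K \<and> (\<forall>\<sigma>\<in>K. finite \<sigma> \<and> \<sigma> \<noteq> {}) \<and>
     (\<forall>\<sigma>\<in>K. \<forall>\<tau>. \<tau> \<subseteq> \<sigma> \<and> \<tau> \<noteq> {} \<longrightarrow> \<tau> \<in> K)"

definition vert :: "'a set set \<Rightarrow> 'a set" where
  "vert K = \<Union>K"

definition is_edge :: "'a set set \<Rightarrow> 'a \<Rightarrow> 'a \<Rightarrow> bool" where
  "is_edge K u v \<longleftrightarrow> u \<noteq> v \<and> {u, v} \<in> K"

definition is_path :: "'a set set \<Rightarrow> 'a list \<Rightarrow> 'a \<Rightarrow> 'a \<Rightarrow> bool" where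
  "is_path K p x y \<longleftrightarrow> p \<noteq> [] \<and> hd p = x \<and> last p = y \<and> set p \<subseteq> vert K \<and>
     (\<forall>i. Suc i < length p \<longrightarrow> is_edge K (p ! i) (p ! Suc i))"

definition sc_connected :: "'a set set \<Rightarrow> bool" where
  "sc_connected K \<longleftrightarrow> (\<forall>x\<in>vert K. \<forall>y\<in>vert K. \<exists>p. is_path K p x y)"

definition path_dominated_distance :: "'a set set \<Rightarrow> ('a \<Rightarrow> 'a \<Rightarrow> real) \<Rightarrow> bool" where
  "path_dominated_distance K d \<longleftrightarrow>
     (\<forall>x\<in>vert K. \<forall>y\<in>vert K. d x y \<ge> 0) \<and> (\<forall>x\<in>vert K. d x x = 0) \<and>
     (\<forall>x\<in>vert K. \<forall>y\<in>vert K. \<exists>p. is_path K p x y \<and> d x y = Max (d x ` set p))"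

definition pd_shortest_path ::
    "'a set set \<Rightarrow> ('a \<Rightarrow> 'a \<Rightarrow> real) \<Rightarrow> 'a list \<Rightarrow> 'a \<Rightarrow> 'a \<Rightarrow> bool" where
  "pd_shortest_path K d p x y \<longleftrightarrow> is_path K p x y \<and>
     (\<forall>i\<in>{1..<length p}. d x (p ! i) = Max ((\<lambda>j. d x (p ! j)) ` {0..i}))"

end

theory Submission
  imports Defs
begin

text \<open>Fix the source \<open>x\<close> and induct on the number of vertices strictly below \<open>y\<close> in the
  order given by \<open>d x\<close>. Take a path to \<open>y\<close> along which \<open>d x\<close> never exceeds \<open>d x y\<close>, and
  let \<open>u\<close> be its last vertex with \<open>d x u < d x y\<close>; every later vertex sits exactly at
  level \<open>d x y\<close>. By induction there is a path to \<open>u\<close> along which \<open>d x\<close> is nondecreasing,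
  and replacing the part of the original path up to \<open>u\<close> by it gives such a path to \<open>y\<close>.\<close>

lemma is_path_appendI:
  assumes "is_path K q x u" "is_path K r v y" "is_edge K u v"
  shows "is_path K (q @ r) x y"
  unfolding is_path_def
proof (intro conjI allI impI)
  show "q @ r \<noteq> []" "hd (q @ r) = x" "last (q @ r) = y" "set (q @ r) \<subseteq> vert K"
    using assms(1,2) unfolding is_path_def by auto
  fix i assume i: "Suc i < length (q @ r)"
  consider "Suc i < length q" | "Suc i = length q" | "length q \<le> i" by linarith
  then show "is_edge K ((q @ r) ! i) ((q @ r) ! Suc i)"
  proof cases
    case 1
    then show ?thesis using assms(1) by (simp add: nth_append is_path_def)
  next
    case 2
    have "q ! i = u" using assms(1) 2 unfolding is_path_def by (metis diff_Suc_1 last_conv_nth)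
    moreover have "r ! 0 = v" using assms(2) unfolding is_path_def by (metis hd_conv_nth)
    ultimately show ?thesis using 2 assms(3) by (simp add: nth_append)
  next
    case 3
    then obtain k where k: "i = length q + k" using le_Suc_ex by blast
    then have "is_edge K (r ! k) (r ! Suc k)" using assms(2) i unfolding is_path_def by simp
    then show ?thesis using k by (simp add: nth_append)
  qed
qed

lemma is_path_suffix:
  assumes "is_path K (us @ u # ws) x y" "ws \<noteq> []"
  shows "is_edge K u (hd ws) \<and> is_path K ws (hd ws) y"
proof -
  let ?p = "us @ u # ws"
  have "Suc (length us) < length ?p" using assms(2) by simp
  then have "is_edge K (?p ! length us) (?p ! Suc (length us))"
    using assms(1) unfolding is_path_def by blast
  then have "is_edge K u (hd ws)" using assms(2) by (simp add: nth_append hd_conv_nth)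
  moreover have "is_path K ws (hd ws) y"
    unfolding is_path_def
  proof (intro conjI allI impI)
    show "ws \<noteq> []" "hd ws = hd ws" by (fact assms(2)) simp
    show "last ws = y" "set ws \<subseteq> vert K" using assms unfolding is_path_def by auto
    fix i assume "Suc i < length ws"
    then have "is_edge K (?p ! (Suc (length us) + i)) (?p ! Suc (Suc (length us) + i))"
      using assms(1) unfolding is_path_def by simp
    then show "is_edge K (ws ! i) (ws ! Suc i)" by (simp add: nth_append)
  qed
  ultimately show ?thesis ..
qed

lemma sorted_map_le_last:
  assumes "sorted (map f xs)" "z \<in> set xs"
  shows "f z \<le> f (last xs)"
proof -
  obtain i where i: "i < length xs" "z = xs ! i" using assms(2) by (auto simp: in_set_conv_nth)
  then have "map f xs ! i \<le> map f xs ! (length xs - 1)"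
    using assms(1) by (subst (asm) sorted_iff_nth_mono) simp
  moreover have "xs \<noteq> []" using assms(2) by auto
  ultimately show ?thesis using i by (simp add: last_conv_nth)
qed

lemma finite_vert: "simplicial_complex K \<Longrightarrow> finite (vert K)"
  unfolding simplicial_complex_def vert_def by blast

lemma exists_monotone_path:
  fixes f :: "'a \<Rightarrow> 'b::linorder"
  assumes fin: "finite (vert K)"
    and dominated: "\<And>y. y \<in> vert K \<Longrightarrow> \<exists>p. is_path K p x y \<and> f y = Max (f ` set p)"
    and "y \<in> vert K"
  shows "\<exists>p. is_path K p x y \<and> sorted (map f p)"
  using \<open>y \<in> vert K\<close>
proof (induction "card {w \<in> vert K. f w < f y}" arbitrary: y rule: less_induct)
  case less
  obtain p where p: "is_path K p x y" and max: "f y = Max (f ` set p)"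
    using dominated less.prems by blast
  have below_y: "f w \<le> f y" if "w \<in> set p" for w
    using max that by simp
  show ?case
  proof (cases "\<exists>w \<in> set p. f w < f y")
    case False
    then have "\<forall>w \<in> set p. f w = f y" using below_y by (auto simp: le_less)
    then have "map f p = replicate (length p) (f y)" by (intro replicate_eqI) auto
    then show ?thesis using p by (metis sorted_replicate)
  next
    case True
    then obtain us u ws where split: "p = us @ u # ws" and u: "f u < f y"
      and at_level: "\<forall>w \<in> set ws. \<not> f w < f y"
      using split_list_last_prop[OF True] by blast
    have "ws \<noteq> []" using p split u unfolding is_path_def by auto
    then have edge: "is_edge K u (hd ws)" and tail: "is_path K ws (hd ws) y"
      using is_path_suffix[of K us u ws x y] p split by simp_all
    have u_vert: "u \<in> vert K" using p split unfolding is_path_def by auto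
    have "{w \<in> vert K. f w < f u} \<subset> {w \<in> vert K. f w < f y}"
      using u u_vert by auto
    then have "card {w \<in> vert K. f w < f u} < card {w \<in> vert K. f w < f y}"
      using fin by (simp add: psubset_card_mono)
    then obtain q where q: "is_path K q x u" and q_sorted: "sorted (map f q)"
      using less.hyps u_vert by blast
    have "\<forall>w \<in> set ws. f w = f y" using at_level below_y split by (auto simp: le_less)
    then have "map f ws = replicate (length ws) (f y)" by (intro replicate_eqI) auto
    moreover have "f v \<le> f y" if "v \<in> set q" for v
      using sorted_map_le_last[OF q_sorted that] q u unfolding is_path_def by simp
    ultimately have "sorted (map f (q @ ws))"
      using q_sorted by (simp add: sorted_append)
    moreover have "is_path K (q @ ws) x y" using is_path_appendI[OF q tail edge] .
    ultimately show ?thesis by blast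
  qed
qed

theorem claim2:
  fixes K :: "'a set set" and d :: "'a \<Rightarrow> 'a \<Rightarrow> real"
  assumes "simplicial_complex K" and "sc_connected K"
    and "path_dominated_distance K d"
    and "x \<in> vert K" and "y \<in> vert K"
  shows "\<exists>p. pd_shortest_path K d p x y"
proof -
  obtain p where p: "is_path K p x y" and sorted: "sorted (map (d x) p)"
    using exists_monotone_path[OF finite_vert[OF assms(1)] _ assms(5), of x "d x"]
      assms(3,4) unfolding path_dominated_distance_def by blast
  have "d x (p ! i) = Max ((\<lambda>j. d x (p ! j)) ` {0..i})" if "i < length p" for i
    using sorted that by (intro Max_eqI[symmetric]) (auto simp: sorted_iff_nth_mono)
  then have "pd_shortest_path K d p x y"
    using p unfolding pd_shortest_path_def by simp
  then show ?thesis by blast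
qed

end
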